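(* For every regular $\Delta$-matroid $D=(E,\mathcal{B})$, the basis generating polynomial $g_D=\sum_{B\in\mathcal{B}}\prod_{e\in B}x_e$ is Hurwitz stable.
   Context: A $\Delta$-matroid is a pair $(E,\mathcal{B})$, $E$ finite, $\mathcal{B}$ a nonempty family of subsets, such that for all $B,B'\in\mathcal{B}$ and $x\in B\triangle B'$ there is $y\in B\triangle B'$ with $B\triangle\{x,y\}\in\mathcal{B}$; it is even if all bases have the same parity. For a symmetric or skew-symmetric matrix $\mathbf{A}$ over a field $K$ indexed by $E$, $D(\mathbf{A})=(E,\{I:\mathbf{A}[I]\text{ nonsingular}\})$ (empty submatrix nonsingular); the twist $D*X$ has bases $\{B\triangle X\}$. $D$ is representable over $K$ if $D=D(\mathbf{A})*X$ for such $\mathbf{A}$ over $K$ and some $X$. $D$ is regular if it is even and representable over every field (equivalently, $D=D(\mathbf{A})*X$ for a real skew-symmetric $\mathbf{A}$ with all principal minors in $\{0,\pm1\}$). A polynomial is Hurwitz stable if it does not vanish when all variables have positive real part. *)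

theory Defs
  imports "HOL-Analysis.Analysis" "HOL-Combinatorics.Permutations"
begin

definition delta_matroid :: "'a set \<Rightarrow> 'a set set \<Rightarrow> bool" where
  "delta_matroid E Bs \<longleftrightarrow> finite E \<and> Bs \<noteq> {} \<and> (\<forall>B\<in>Bs. B \<subseteq> E) \<and>
     (\<forall>B\<in>Bs. \<forall>B'\<in>Bs. \<forall>x \<in> (B - B') \<union> (B' - B).
        \<exists>y \<in> (B - B') \<union> (B' - B).
          (let xy = {x, y} in (B - xy) \<union> (xy - B)) \<in> Bs)"

definition even_delta_matroid :: "'a set \<Rightarrow> 'a set set \<Rightarrow> bool" where
  "even_delta_matroid E Bs \<longleftrightarrow> delta_matroid E Bs \<and>
     (\<forall>B\<in>Bs. \<forall>B'\<in>Bs. even (card B) = even (card B'))"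

definition principal_minor :: "('a \<Rightarrow> 'a \<Rightarrow> 'r::comm_ring_1) \<Rightarrow> 'a set \<Rightarrow> 'r" where
  "principal_minor A I = (\<Sum>p \<in> {p. p permutes I}. of_int (sign p) * (\<Prod>i\<in>I. A i (p i)))"

definition twist :: "'a set set \<Rightarrow> 'a set \<Rightarrow> 'a set set" where
  "twist Bs X = (\<lambda>B. (B - X) \<union> (X - B)) ` Bs"

definition DA_bases :: "'a set \<Rightarrow> ('a \<Rightarrow> 'a \<Rightarrow> 'r::comm_ring_1) \<Rightarrow> 'a set set" where
  "DA_bases E A = {I. I \<subseteq> E \<and> principal_minor A I \<noteq> 0}"

definition regular_delta_matroid :: "'a set \<Rightarrow> 'a set set \<Rightarrow> bool" where
  "regular_delta_matroid E Bs \<longleftrightarrow> even_delta_matroid E Bs \<and>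
     (\<exists>(A :: 'a \<Rightarrow> 'a \<Rightarrow> real) X.
        (\<forall>i\<in>E. \<forall>j\<in>E. A i j = - A j i) \<and>
        (\<forall>I. I \<subseteq> E \<longrightarrow> principal_minor A I \<in> {0, 1, -1}) \<and>
        Bs = twist (DA_bases E A) X)"

definition basis_gen_poly :: "'a set set \<Rightarrow> ('a \<Rightarrow> complex) \<Rightarrow> complex" where
  "basis_gen_poly Bs x = (\<Sum>B\<in>Bs. \<Prod>e\<in>B. x e)"

definition hurwitz_stable :: "'a set \<Rightarrow> (('a \<Rightarrow> complex) \<Rightarrow> complex) \<Rightarrow> bool" where
  "hurwitz_stable E g \<longleftrightarrow> (\<forall>x. (\<forall>e\<in>E. 0 < Re (x e)) \<longrightarrow> g x \<noteq> 0)"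

end

theory Submission
  imports Defs "Jordan_Normal_Form.Determinant"
begin

text \<open>
  Write \<open>D = D(A) * X\<close>. Since \<open>J \<triangle> X = (E - J) \<triangle> (E - X)\<close>, every monomial
  \<open>x\<^bsup>J \<triangle> X\<^esup>\<close> equals \<open>x\<^bsup>E - X\<^esup> z\<^bsup>E - J\<^esup>\<close>, where \<open>z = x\<close> on \<open>X\<close> and
  \<open>z = 1/x\<close> off \<open>X\<close>; note that \<open>Re z > 0\<close> whenever \<open>Re x > 0\<close>.
  Principal minors of a real skew-symmetric matrix are nonnegative: along \<open>(1 - u) I + u A\<close>
  the determinant starts at 1 and cannot vanish for \<open>0 < u < 1\<close>. So for regular \<open>D\<close> every
  nonzero principal minor of \<open>A\<close> is 1, and expanding the determinant of \<open>diag z + A\<close> gives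
  \<open>det (diag z + A) = \<Sum>\<^bsub>J \<in> D(A)\<^esub> z\<^bsup>E - J\<^esup>\<close>, hence
  \<open>g\<^sub>D(x) = x\<^bsup>E - X\<^esup> det (diag z + A)\<close>. Finally \<open>diag z + A\<close> is nonsingular when
  \<open>Re z > 0\<close>: if \<open>(diag z + A) v = 0\<close>, the real part of \<open>v\<^sup>* (diag z + A) v\<close> is
  \<open>\<Sum>\<^sub>i Re z\<^sub>i |v\<^sub>i|\<^sup>2\<close>, because \<open>v\<^sup>* A v\<close> is purely imaginary.
\<close>

lemma principal_minor_of_real:
  fixes A :: "'a \<Rightarrow> 'a \<Rightarrow> real"
  shows "principal_minor (\<lambda>i j. of_real (A i j)) I
    = (of_real (principal_minor A I) :: 'b::{real_algebra_1, comm_ring_1})"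
  unfolding principal_minor_def by (simp add: of_real_sum of_real_prod)

lemma prod_diagonal_entries_permutes:
  fixes z :: "'a \<Rightarrow> 'b::comm_semiring_1"
  assumes "finite S" and "p permutes S" and "J \<subseteq> S"
  shows "(\<Prod>i\<in>S - J. if i = p i then z i else 0)
    = (if p permutes J then (\<Prod>i\<in>S - J. z i) else 0)"
proof (cases "p permutes J")
  case True
  then have "p i = i" if "i \<in> S - J" for i
    using that by (simp add: permutes_not_in)
  with True show ?thesis by (auto intro: prod.cong)
next
  case False
  have "\<exists>i\<in>S - J. p i \<noteq> i"
  proof (rule ccontr)
    assume "\<not> ?thesis"
    then have "p i = i" if "i \<notin> J" for i
      using that assms(2) by (metis DiffI permutes_not_in)
    with assms(2) have "p permutes J" unfolding permutes_def by blast
    with False show False by contradiction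
  qed
  then obtain i where "i \<in> S - J" and "p i \<noteq> i" by blast
  then have "(\<Prod>i\<in>S - J. if i = p i then z i else 0) = 0"
    using assms(1) by (intro prod_zero bexI[of _ i]) auto
  with False show ?thesis by simp
qed

lemma principal_minor_diag:
  assumes "finite S"
  shows "principal_minor (\<lambda>i j. if i = j then z i else 0) S = prod z S"
proof -
  have "principal_minor (\<lambda>i j. if i = j then z i else 0) S
      = (\<Sum>p\<in>{p. p permutes S}. if p = id then prod z S else 0)"
    unfolding principal_minor_def
    using prod_diagonal_entries_permutes[OF assms _ empty_subsetI, of _ z]
    by (intro sum.cong) auto
  also have "\<dots> = prod z S"
    using finite_permutations[OF assms] by (simp add: sum.delta permutes_id)
  finally show ?thesis .
qed

lemma principal_minor_diag_add:
  fixes A :: "'a \<Rightarrow> 'a \<Rightarrow> 'r::comm_ring_1"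
  assumes fin: "finite S"
  shows "principal_minor (\<lambda>i j. (if i = j then z i else 0) + A i j) S
       = (\<Sum>J\<in>Pow S. principal_minor A J * (\<Prod>i\<in>S - J. z i))"
proof -
  let ?D = "\<lambda>p J. (\<Prod>i\<in>S - J. if i = p i then z i else 0)"
  let ?t = "\<lambda>p J. of_int (sign p) * (\<Prod>i\<in>J. A i (p i))"
  have "principal_minor (\<lambda>i j. (if i = j then z i else 0) + A i j) S
      = (\<Sum>p\<in>{p. p permutes S}. \<Sum>J\<in>Pow S. ?t p J * ?D p J)"
    unfolding principal_minor_def
    by (intro sum.cong refl)
      (simp add: add.commute[of "if _ then _ else _"] prod_add[OF fin] sum_distrib_left mult.assoc)
  also have "\<dots> = (\<Sum>J\<in>Pow S. \<Sum>p\<in>{p. p permutes S}. ?t p J * ?D p J)"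
    by (rule sum.swap)
  also have "\<dots> = (\<Sum>J\<in>Pow S. principal_minor A J * (\<Prod>i\<in>S - J. z i))"
  proof (intro sum.cong refl)
    fix J assume "J \<in> Pow S"
    then have J: "J \<subseteq> S" by simp
    have "(\<Sum>p\<in>{p. p permutes S}. ?t p J * ?D p J)
        = (\<Sum>p\<in>{p. p permutes S}. if p permutes J then ?t p J * (\<Prod>i\<in>S - J. z i) else 0)"
      by (intro sum.cong refl) (simp add: prod_diagonal_entries_permutes[OF fin _ J])
    also have "\<dots> = (\<Sum>p\<in>{p \<in> {p. p permutes S}. p permutes J}. ?t p J * (\<Prod>i\<in>S - J. z i))"
      by (rule sum.inter_filter[symmetric]) (rule finite_permutations[OF fin])
    also have "{p \<in> {p. p permutes S}. p permutes J} = {p. p permutes J}"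
      using J permutes_subset by blast
    finally show "(\<Sum>p\<in>{p. p permutes S}. ?t p J * ?D p J) = principal_minor A J * (\<Prod>i\<in>S - J. z i)"
      unfolding principal_minor_def by (simp add: sum_distrib_right)
  qed
  finally show ?thesis .
qed

lemma principal_minor_eq_det:
  assumes f: "bij_betw f {0..<n} S"
  shows "principal_minor M S = det (mat n n (\<lambda>(i, j). M (f i) (f j)))"
proof -
  define g where "g = inv_into {0..<n} f"
  have gf: "\<And>i. i \<in> {0..<n} \<Longrightarrow> g (f i) = i"
    unfolding g_def using f by (simp add: bij_betw_inv_into_left)
  have fg: "\<And>a. a \<in> S \<Longrightarrow> f (g a) = a"
    unfolding g_def using f by (simp add: bij_betw_inv_into_right)
  have g: "bij_betw g S {0..<n}"
    unfolding g_def using f by (simp add: bij_betw_inv_into)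
  have inj_f: "inj_on f {0..<n}"
    using f by (simp add: bij_betw_def)
  have "det (mat n n (\<lambda>(i, j). M (f i) (f j)))
      = (\<Sum>p\<in>{p. p permutes {0..<n}}. of_int (sign p) * (\<Prod>i\<in>{0..<n}. M (f i) (f (p i))))"
    by (subst det_def'[of _ n]) (auto intro!: sum.cong prod.cong simp: permutes_in_image)
  also have "\<dots> = principal_minor M S"
    unfolding principal_minor_def
  proof (rule sum.reindex_bij_witness[where i = "map_permutation S g" and j = "map_permutation {0..<n} f"])
    fix p assume "p \<in> {p. p permutes {0..<n}}"
    then have p: "p permutes {0..<n}" by simp
    show "map_permutation S g (map_permutation {0..<n} f p) = p"
      by (rule map_permutation_compose_inv[OF f p gf])
    show "map_permutation {0..<n} f p \<in> {p. p permutes S}"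
      using map_permutation_permutes[OF f p] by simp
    have "(\<Prod>a\<in>S. M a (map_permutation {0..<n} f p a))
        = (\<Prod>i\<in>{0..<n}. M (f i) (map_permutation {0..<n} f p (f i)))"
      using prod.reindex_bij_betw[OF f, of "\<lambda>a. M a (map_permutation {0..<n} f p a)"] by simp
    also have "\<dots> = (\<Prod>i\<in>{0..<n}. M (f i) (f (p i)))"
      by (intro prod.cong refl) (simp add: map_permutation_apply[OF inj_f])
    finally show "of_int (sign (map_permutation {0..<n} f p)) * (\<Prod>a\<in>S. M a (map_permutation {0..<n} f p a))
        = of_int (sign p) * (\<Prod>i\<in>{0..<n}. M (f i) (f (p i)))"
      using sign_map_permutation[OF inj_f p] by simp
  next
    fix q assume "q \<in> {p. p permutes S}"
    then have q: "q permutes S" by simp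
    show "map_permutation {0..<n} f (map_permutation S g q) = q"
      by (rule map_permutation_compose_inv[OF g q fg])
    show "map_permutation S g q \<in> {p. p permutes {0..<n}}"
      using map_permutation_permutes[OF g q] by simp
  qed
  finally show ?thesis by simp
qed

lemma principal_minor_eq_0_imp_null_vector:
  fixes M :: "'a \<Rightarrow> 'a \<Rightarrow> 'r::field"
  assumes "finite S" and "principal_minor M S = 0"
  obtains v where "\<exists>i\<in>S. v i \<noteq> 0" and "\<forall>i\<in>S. (\<Sum>j\<in>S. M i j * v j) = 0"
proof -
  obtain f where f: "bij_betw f {0..<card S} S"
    using ex_bij_betw_nat_finite[OF assms(1)] by blast
  define n where "n = card S"
  define g where "g = inv_into {0..<n} f"
  have gf: "\<And>i. i < n \<Longrightarrow> g (f i) = i"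
    unfolding g_def n_def using f by (simp add: bij_betw_inv_into_left)
  have fg: "\<And>a. a \<in> S \<Longrightarrow> f (g a) = a"
    unfolding g_def n_def using f by (simp add: bij_betw_inv_into_right)
  have "bij_betw g S {0..<n}"
    unfolding g_def n_def using f by (rule bij_betw_inv_into)
  then have g_in: "\<And>a. a \<in> S \<Longrightarrow> g a < n"
    using bij_betw_apply by fastforce
  define Mn where "Mn = mat n n (\<lambda>(i, j). M (f i) (f j))"
  have Mn: "Mn \<in> carrier_mat n n" unfolding Mn_def by simp
  have "det Mn = principal_minor M S"
    unfolding Mn_def n_def by (rule principal_minor_eq_det[OF f, symmetric])
  with assms(2) have "det Mn = 0" by simp
  then obtain w where w: "w \<in> carrier_vec n" "w \<noteq> 0\<^sub>v n" "Mn *\<^sub>v w = 0\<^sub>v n"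
    using det_0_iff_vec_prod_zero_field[OF Mn] by blast
  obtain k where k: "k < n" "w $ k \<noteq> 0"
    using w(1,2) by (auto simp: vec_eq_iff)
  show ?thesis
  proof
    show "\<exists>i\<in>S. w $ g i \<noteq> 0"
      using k f gf by (intro bexI[of _ "f k"]) (auto simp: bij_betw_def n_def)
    show "\<forall>a\<in>S. (\<Sum>j\<in>S. M a j * w $ g j) = 0"
    proof
      fix a assume a: "a \<in> S"
      have "(\<Sum>j\<in>S. M a j * w $ g j) = (\<Sum>i\<in>{0..<n}. M a (f i) * w $ g (f i))"
        using sum.reindex_bij_betw[OF f, of "\<lambda>j. M a j * w $ g j"] by (simp add: n_def)
      also have "\<dots> = (Mn *\<^sub>v w) $ g a"
        using w(1) g_in[OF a] by (simp add: Mn_def scalar_prod_def gf fg a)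
      also have "\<dots> = 0"
        using w(3) g_in[OF a] by simp
      finally show "(\<Sum>j\<in>S. M a j * w $ g j) = 0" .
    qed
  qed
qed

lemma skew_quadratic_form_Re_eq_0:
  fixes A :: "'a \<Rightarrow> 'a \<Rightarrow> real" and v :: "'a \<Rightarrow> complex"
  assumes skew: "\<forall>i\<in>S. \<forall>j\<in>S. A i j = - A j i"
  shows "Re (\<Sum>i\<in>S. \<Sum>j\<in>S. cnj (v i) * of_real (A i j) * v j) = 0"
proof -
  define T where "T = (\<Sum>i\<in>S. \<Sum>j\<in>S. cnj (v i) * of_real (A i j) * v j)"
  have "cnj T = (\<Sum>i\<in>S. \<Sum>j\<in>S. v i * of_real (A i j) * cnj (v j))"
    unfolding T_def by simp
  also have "\<dots> = (\<Sum>j\<in>S. \<Sum>i\<in>S. v i * of_real (A i j) * cnj (v j))"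
    by (rule sum.swap)
  also have "\<dots> = (\<Sum>j\<in>S. \<Sum>i\<in>S. - (cnj (v j) * of_real (A j i) * v i))"
  proof (intro sum.cong refl)
    fix j i assume "j \<in> S" "i \<in> S"
    with skew have "A i j = - A j i" by blast
    then show "v i * of_real (A i j) * cnj (v j) = - (cnj (v j) * of_real (A j i) * v i)"
      by (simp add: algebra_simps)
  qed
  also have "\<dots> = - T"
    unfolding T_def by (simp add: sum_negf)
  finally have "cnj T = - T" .
  then have "Re (cnj T) = Re (- T)" by (rule arg_cong)
  then show ?thesis
    unfolding T_def[symmetric] by simp
qed

lemma principal_minor_diag_add_skew_neq_0:
  fixes A :: "'a \<Rightarrow> 'a \<Rightarrow> real" and z :: "'a \<Rightarrow> complex"
  assumes fin: "finite S" and skew: "\<forall>i\<in>S. \<forall>j\<in>S. A i j = - A j i"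
    and pos: "\<forall>i\<in>S. 0 < Re (z i)"
  shows "principal_minor (\<lambda>i j. (if i = j then z i else 0) + of_real (A i j)) S \<noteq> 0"
proof
  assume "principal_minor (\<lambda>i j. (if i = j then z i else 0) + of_real (A i j)) S = 0"
  then obtain v where v: "\<exists>i\<in>S. v i \<noteq> 0"
    and null: "\<forall>i\<in>S. (\<Sum>j\<in>S. ((if i = j then z i else 0) + of_real (A i j)) * v j) = 0"
    using principal_minor_eq_0_imp_null_vector[OF fin] by blast
  have row: "(\<Sum>j\<in>S. ((if i = j then z i else 0) + of_real (A i j)) * v j)
      = z i * v i + (\<Sum>j\<in>S. of_real (A i j) * v j)" if "i \<in> S" for i
  proof -
    have "(\<Sum>j\<in>S. ((if i = j then z i else 0) + of_real (A i j)) * v j)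
        = (\<Sum>j\<in>S. if i = j then z i * v j else 0) + (\<Sum>j\<in>S. of_real (A i j) * v j)"
      unfolding sum.distrib[symmetric] by (intro sum.cong refl) (simp add: distrib_right)
    with fin that show ?thesis by (simp add: sum.delta')
  qed
  have "0 = (\<Sum>i\<in>S. cnj (v i) * (\<Sum>j\<in>S. ((if i = j then z i else 0) + of_real (A i j)) * v j))"
    using null by simp
  also have "\<dots> = (\<Sum>i\<in>S. z i * of_real ((cmod (v i))\<^sup>2)
      + (\<Sum>j\<in>S. cnj (v i) * of_real (A i j) * v j))"
  proof (intro sum.cong refl)
    fix i assume "i \<in> S"
    have "cnj (v i) * (\<Sum>j\<in>S. ((if i = j then z i else 0) + of_real (A i j)) * v j)
        = z i * (cnj (v i) * v i) + (\<Sum>j\<in>S. cnj (v i) * of_real (A i j) * v j)"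
      unfolding row[OF \<open>i \<in> S\<close>] by (simp add: algebra_simps sum_distrib_left)
    also have "cnj (v i) * v i = of_real ((cmod (v i))\<^sup>2)"
      using complex_norm_square[of "v i"] by (simp add: mult.commute)
    finally show "cnj (v i) * (\<Sum>j\<in>S. ((if i = j then z i else 0) + of_real (A i j)) * v j)
        = z i * of_real ((cmod (v i))\<^sup>2) + (\<Sum>j\<in>S. cnj (v i) * of_real (A i j) * v j)" .
  qed
  also have "\<dots> = (\<Sum>i\<in>S. z i * of_real ((cmod (v i))\<^sup>2))
      + (\<Sum>i\<in>S. \<Sum>j\<in>S. cnj (v i) * of_real (A i j) * v j)"
    by (rule sum.distrib)
  finally have "Re (\<Sum>i\<in>S. z i * of_real ((cmod (v i))\<^sup>2))
      + Re (\<Sum>i\<in>S. \<Sum>j\<in>S. cnj (v i) * of_real (A i j) * v j) = 0"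
    by (metis plus_complex.sel(1) zero_complex.sel(1))
  then have "(\<Sum>i\<in>S. Re (z i) * (cmod (v i))\<^sup>2) = 0"
    unfolding skew_quadratic_form_Re_eq_0[OF skew] by (simp add: Re_sum)
  moreover have "0 < (\<Sum>i\<in>S. Re (z i) * (cmod (v i))\<^sup>2)"
  proof -
    obtain k where "k \<in> S" "v k \<noteq> 0" using v by blast
    with fin pos show ?thesis
      by (intro sum_pos2[of S k]) (auto intro: less_imp_le)
  qed
  ultimately show False by simp
qed

lemma principal_minor_skew_nonneg:
  fixes A :: "'a \<Rightarrow> 'a \<Rightarrow> real"
  assumes fin: "finite S" and skew: "\<forall>i\<in>S. \<forall>j\<in>S. A i j = - A j i"
  shows "0 \<le> principal_minor A S"
proof (rule ccontr)
  assume neg: "\<not> 0 \<le> principal_minor A S"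
  define \<phi> where "\<phi> u = principal_minor (\<lambda>i j. (if i = j then 1 - u else 0) + u * A i j) S" for u
  have entry_cont: "continuous_on {0..1} (\<lambda>u. (if i = j then 1 - u else 0) + u * A i j)" for i j
    by (cases "i = j") (auto intro!: continuous_intros)
  have "continuous_on {0..1} \<phi>"
    unfolding \<phi>_def principal_minor_def
    by (auto intro!: continuous_on_sum continuous_on_prod continuous_on_mult entry_cont)
  moreover have "\<phi> 0 = 1"
    using principal_minor_diag[OF fin, of "\<lambda>_. 1"] by (simp add: \<phi>_def cong: if_cong)
  moreover have "\<phi> 1 = principal_minor A S"
    by (simp add: \<phi>_def cong: if_cong)
  ultimately obtain u where u: "0 \<le> u" "u \<le> 1" "\<phi> u = 0"
    using IVT2'[of \<phi> 1 0 0] neg by auto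
  with \<open>\<phi> 0 = 1\<close> \<open>\<phi> 1 = principal_minor A S\<close> neg have "0 < u" "u < 1"
    by (auto simp: order.order_iff_strict)
  have "complex_of_real (\<phi> u)
      = principal_minor (\<lambda>i j. (if i = j then of_real (1 - u) else 0) + of_real (u * A i j)) S"
    unfolding \<phi>_def principal_minor_of_real[symmetric]
    by (intro arg_cong[where f = "\<lambda>M. principal_minor M S"] ext) simp
  also have "\<dots> \<noteq> 0"
  proof (rule principal_minor_diag_add_skew_neq_0[OF fin])
    show "\<forall>i\<in>S. \<forall>j\<in>S. u * A i j = - (u * A j i)"
      using skew by (metis mult_minus_right)
    show "\<forall>i\<in>S. 0 < Re (of_real (1 - u))"
      using \<open>u < 1\<close> by simp
  qed
  finally show False using u(3) by simp
qed

lemma prod_symmetric_difference: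
  fixes x :: "'a \<Rightarrow> 'b::field"
  assumes "finite B" and "finite X" and nz: "\<forall>e\<in>X. x e \<noteq> 0"
  shows "(\<Prod>e\<in>(B - X) \<union> (X - B). x e)
    = prod x X * (\<Prod>e\<in>B. if e \<in> X then inverse (x e) else x e)"
proof -
  have "(\<Prod>e\<in>B. if e \<in> X then inverse (x e) else x e)
      = (\<Prod>e\<in>B \<inter> X. if e \<in> X then inverse (x e) else x e)
        * (\<Prod>e\<in>B - X. if e \<in> X then inverse (x e) else x e)"
    using assms(1) by (rule prod.Int_Diff)
  also have "\<dots> = (\<Prod>e\<in>B \<inter> X. inverse (x e)) * prod x (B - X)"
    by (intro arg_cong2[where f = "(*)"] prod.cong) auto
  finally have "(\<Prod>e\<in>B. if e \<in> X then inverse (x e) else x e)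
      = (\<Prod>e\<in>B \<inter> X. inverse (x e)) * prod x (B - X)" .
  moreover have "prod x X = prod x (X \<inter> B) * prod x (X - B)"
    using assms(2) by (rule prod.Int_Diff)
  moreover have "prod x (X \<inter> B) * (\<Prod>e\<in>B \<inter> X. inverse (x e)) = 1"
    using nz by (simp add: Int_commute prod.distrib[symmetric] prod.neutral)
  moreover have "(\<Prod>e\<in>(B - X) \<union> (X - B). x e) = prod x (B - X) * prod x (X - B)"
    using assms(1,2) by (intro prod.union_disjoint) auto
  ultimately show ?thesis
    by (metis (no_types, lifting) mult.assoc mult.commute mult.right_neutral)
qed

lemma basis_gen_poly_twist:
  assumes fin: "finite E" and Bs_sub: "Bs \<subseteq> Pow E" and X: "X \<subseteq> E"
    and nz: "\<forall>e\<in>E - X. x e \<noteq> 0"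
  shows "basis_gen_poly (twist Bs X) x
    = prod x (E - X) * (\<Sum>J\<in>Bs. \<Prod>e\<in>E - J. if e \<in> X then x e else inverse (x e))"
proof -
  have "inj_on (\<lambda>J. (J - X) \<union> (X - J)) Bs"
    unfolding inj_on_def by blast
  then have "basis_gen_poly (twist Bs X) x = (\<Sum>J\<in>Bs. \<Prod>e\<in>(J - X) \<union> (X - J). x e)"
    unfolding basis_gen_poly_def twist_def by (simp add: sum.reindex)
  also have "\<dots> = (\<Sum>J\<in>Bs. prod x (E - X) * (\<Prod>e\<in>E - J. if e \<in> X then x e else inverse (x e)))"
  proof (intro sum.cong refl)
    fix J assume "J \<in> Bs"
    then have J: "J \<subseteq> E" using Bs_sub by blast
    \<comment> \<open>a twist by \<open>X\<close> is also a twist of the complements by \<open>E - X\<close>\<close>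
    have "(J - X) \<union> (X - J) = ((E - J) - (E - X)) \<union> ((E - X) - (E - J))"
      using J X by blast
    then show "(\<Prod>e\<in>(J - X) \<union> (X - J). x e)
        = prod x (E - X) * (\<Prod>e\<in>E - J. if e \<in> X then x e else inverse (x e))"
      using prod_symmetric_difference[of "E - J" "E - X" x] fin nz
      by (auto intro!: prod.cong)
  qed
  finally show ?thesis by (simp add: sum_distrib_left)
qed

lemma principal_minor_diag_add_eq_sum_DA_bases:
  fixes A :: "'a \<Rightarrow> 'a \<Rightarrow> real" and z :: "'a \<Rightarrow> 'b::{real_algebra_1, comm_ring_1}"
  assumes fin: "finite E" and minors: "\<forall>J. J \<subseteq> E \<longrightarrow> principal_minor A J \<in> {0, 1}"
  shows "principal_minor (\<lambda>i j. (if i = j then z i else 0) + of_real (A i j)) E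
    = (\<Sum>J\<in>DA_bases E A. \<Prod>i\<in>E - J. z i)"
proof -
  have "principal_minor (\<lambda>i j. (if i = j then z i else 0) + of_real (A i j)) E
      = (\<Sum>J\<in>Pow E. of_real (principal_minor A J) * (\<Prod>i\<in>E - J. z i))"
    by (simp add: principal_minor_diag_add[OF fin] principal_minor_of_real)
  also have "\<dots> = (\<Sum>J\<in>DA_bases E A. \<Prod>i\<in>E - J. z i)"
    using fin minors
    by (intro sum.mono_neutral_cong_right) (auto simp: DA_bases_def)
  finally show ?thesis .
qed

lemma Re_inverse_pos:
  fixes w :: complex
  assumes "0 < Re w"
  shows "0 < Re (inverse w)"
proof -
  from assms have "0 < (Re w)\<^sup>2 + (Im w)\<^sup>2"
    by (simp add: add_pos_nonneg)
  with assms show ?thesis by (simp add: divide_pos_pos)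
qed

lemma twist_subset_ground:
  assumes "twist Bs X \<noteq> {}" and "\<forall>B\<in>twist Bs X. B \<subseteq> E" and "Bs \<subseteq> Pow E"
  shows "X \<subseteq> E"
proof -
  obtain J where "J \<in> Bs"
    using assms(1) by (auto simp: twist_def)
  then have "(J - X) \<union> (X - J) \<in> twist Bs X"
    unfolding twist_def by (rule imageI)
  with assms(2) have "(J - X) \<union> (X - J) \<subseteq> E" by (rule bspec)
  moreover from \<open>J \<in> Bs\<close> assms(3) have "J \<subseteq> E" by auto
  ultimately show ?thesis by auto
qed

lemma skew_principal_minor_in_01:
  fixes A :: "'a \<Rightarrow> 'a \<Rightarrow> real"
  assumes fin: "finite E" and skew: "\<forall>i\<in>E. \<forall>j\<in>E. A i j = - A j i"
    and minors: "\<forall>I. I \<subseteq> E \<longrightarrow> principal_minor A I \<in> {0, 1, -1}"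
  shows "\<forall>J. J \<subseteq> E \<longrightarrow> principal_minor A J \<in> {0, 1}"
proof (intro allI impI)
  fix J assume J: "J \<subseteq> E"
  have "0 \<le> principal_minor A J"
    by (rule principal_minor_skew_nonneg[OF finite_subset[OF J fin]]) (use J skew in blast)
  with J minors show "principal_minor A J \<in> {0, 1}" by auto
qed

lemma hurwitz_stable_twist_DA_bases:
  fixes A :: "'a \<Rightarrow> 'a \<Rightarrow> real"
  assumes fin: "finite E" and X: "X \<subseteq> E" and skew: "\<forall>i\<in>E. \<forall>j\<in>E. A i j = - A j i"
    and minors: "\<forall>J. J \<subseteq> E \<longrightarrow> principal_minor A J \<in> {0, 1}"
  shows "hurwitz_stable E (basis_gen_poly (twist (DA_bases E A) X))"
  unfolding hurwitz_stable_def
proof (intro allI impI)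
  fix x :: "'a \<Rightarrow> complex" assume pos: "\<forall>e\<in>E. 0 < Re (x e)"
  define z where "z e = (if e \<in> X then x e else inverse (x e))" for e
  have "basis_gen_poly (twist (DA_bases E A) X) x
      = prod x (E - X) * (\<Sum>J\<in>DA_bases E A. \<Prod>e\<in>E - J. z e)"
    unfolding z_def using fin X pos
    by (intro basis_gen_poly_twist) (auto simp: DA_bases_def)
  also have "\<dots> = prod x (E - X)
      * principal_minor (\<lambda>i j. (if i = j then z i else 0) + of_real (A i j)) E"
    by (simp add: principal_minor_diag_add_eq_sum_DA_bases[OF fin minors])
  also have "\<dots> \<noteq> 0"
  proof -
    have "\<forall>e\<in>E. 0 < Re (z e)"
    proof
      fix e assume "e \<in> E"
      with pos have "0 < Re (x e)" by blast
      with Re_inverse_pos[OF this] show "0 < Re (z e)" by (simp add: z_def)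
    qed
    moreover have "prod x (E - X) \<noteq> 0"
      using pos fin by (auto simp: prod_zero_iff)
    ultimately show ?thesis
      using principal_minor_diag_add_skew_neq_0[OF fin skew] by simp
  qed
  finally show "basis_gen_poly (twist (DA_bases E A) X) x \<noteq> 0" .
qed

theorem lemma4p6:
  fixes E :: "'a set" and Bs :: "'a set set"
  assumes "regular_delta_matroid E Bs"
  shows "hurwitz_stable E (basis_gen_poly Bs)"
proof -
  obtain A :: "'a \<Rightarrow> 'a \<Rightarrow> real" and X where ev: "even_delta_matroid E Bs"
    and skew: "\<forall>i\<in>E. \<forall>j\<in>E. A i j = - A j i"
    and minors: "\<forall>I. I \<subseteq> E \<longrightarrow> principal_minor A I \<in> {0, 1, -1}"
    and Bs: "Bs = twist (DA_bases E A) X"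
    using assms unfolding regular_delta_matroid_def by blast
  have fin: "finite E" and "Bs \<noteq> {}" and "\<forall>B\<in>Bs. B \<subseteq> E"
    using ev unfolding even_delta_matroid_def delta_matroid_def by auto
  have "DA_bases E A \<subseteq> Pow E"
    unfolding DA_bases_def by blast
  with \<open>Bs \<noteq> {}\<close> \<open>\<forall>B\<in>Bs. B \<subseteq> E\<close> have X: "X \<subseteq> E"
    unfolding Bs by (rule twist_subset_ground)
  have "\<forall>J. J \<subseteq> E \<longrightarrow> principal_minor A J \<in> {0, 1}"
    by (rule skew_principal_minor_in_01[OF fin skew minors])
  then show ?thesis
    unfolding Bs by (rule hurwitz_stable_twist_DA_bases[OF fin X skew])
qed

end
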